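(* Let $p$ be a prime and work in $F\otimes_{ku_*}ku_*(\mathbb{Z}_{p^2})$ with the notation of the context. Then for all integers $a,b$ and every integer $k\ge2$, $$ \begin{aligned} p^{k+1}[a,b] ={}& (-1)^k u_1^k\, p\, v^{kg_1}[a,b-kg_1] + (-1)^k u_1^{k-1} v^{(k-1)g_1+g_2}[a,b-(k-1)g_1-g_2]\\ &+\sum_{t=1}^{\lfloor k/2\rfloor}\Big( c_{k+1}(t)(-1)^{k+t}u_1^{k-2t}\,p\, v^{(k-2t)g_1+tg_2}[a,b-(k-2t)g_1-tg_2]\\ &\qquad\qquad + d_{k+1}(t)(-1)^{k+t}u_1^{k-2t-1} v^{(k-2t-1)g_1}v^{(t+1)g_2}[a,b-(k-2t-1)g_1-(t+1)g_2]\Big)\\ &+\Sigma_1+\Sigma_2+\Sigma_3, \end{aligned} $$ where $$\Sigma_1=\sum_{t=0}^{k-1}c_t\,p^{k-t-1}v^{tg_1}(A+B)^{[a,b-tg_1]},\qquad \Sigma_2=\sum_{t=1}^{\lfloor (k-1)/2\rfloor}c'_t\,p^{k-2t-1}v^{tg_2}(A+B)^{[a,b-tg_2]},$$ $$\Sigma_3=\sum_{r=1}^{\lfloor (k-2)/2\rfloor}\ \sum_{t=1}^{k-1-2r}c_{r,t}\,p^{k-2r-t-1}v^{rg_2+tg_1}(A+B)^{[a,b-rg_2-tg_1]}.$$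
   Context: Fix a prime $p$. Let $ku_*=\mathbb{Z}_{(p)}[v]$ ($p$-local connective $K$-theory coefficients, $v$ in degree 2). Put $g_1=p-1$, $g_2=p^2-1$. For $m\ge1$, $0\le t\le p^m-1$, let $a_{t,m}=\binom{p^m}{t+1}v^t$. The reduced $ku_*(\mathbb{Z}_{p^2})$ is the $ku_*$-module generated by $e_j$ ($j\ge1$) with relations $\sum_{t=0}^{p^2-1}a_{t,2}e_{j-t}=0$ for all $j\ge1$, $e_h=0$ for $h\le0$. Let $F$ be the free $ku_*$-module on $\alpha_i$, $i\ge1$ ($\alpha_h=0$ for $h\le0$), and $[i,j]=\alpha_i\otimes e_j\in F\otimes_{ku_*}ku_*(\mathbb{Z}_{p^2})$ (zero if $i\le0$ or $j\le0$). Define the unit $u_1\in\mathbb{Z}_{(p)}^\times$ by $\binom{p^2}{p}=u_1p$, so $a_{g_1,2}=u_1pv^{g_1}$. Convention: $v^s=0$ for $s<0$ (so e.g. $v^{(k-2t-1)g_1}v^{(t+1)g_2}=0$ if $k-2t-1<0$). For integers $a,b$ set $A^{[a,b]}=\sum_{i=1}^{p-2}\binom{p^2}{i+1}v^i[a,b-i]$, $B^{[a,b]}=\sum_{i=p}^{p^2-2}\binom{p^2}{i+1}v^i[a,b-i]$, $(A+B)^{[a,b]}=A^{[a,b]}+B^{[a,b]}$. Integers $c_k(t),d_k(t)$: $c_k(0)=d_k(0)=1$ for $k\ge2$; $c_2(t)=d_2(t)=0$ for $t\ge1$; for $k\ge3$, $t\ge1$: $c_k(t)=d_{k-1}(t-1)+c_{k-1}(t)$,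 $d_k(t)=c_{k-1}(t)$; and $c_k(t)=d_k(t)=0$ if $t<0$ or $k<2$. Finally $c_t=(-1)^{t+1}u_1^t$, $c'_t=(-1)^{t+1}c_{2t+1}(t)$, $c_{r,t}=(-1)^{t+r+1}u_1^t c_{t+2r+1}(r)$. $\lfloor\cdot\rfloor$ is the integer part. *)

theory Defs
  imports Complex_Main "HOL-Computational_Algebra.Polynomial" "HOL-Computational_Algebra.Primes"
begin

text \<open>Ground ring ku_* = Z_(p)[v], realised inside rat poly (v = the polynomial variable).
  Elements of the free ku_*-module on the symbols [i,j] (i,j >= 1) are functions
  int * int => rat poly (coefficient of [i,j]); F (x) ku_*(Z_{p^2}) is this free module
  modulo the ku_*-submodule spanned by the relations alpha_i (x) R_j.\<close>

type_synonym elt = "int \<times> int \<Rightarrow> rat poly"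

definition zploc :: "nat \<Rightarrow> rat \<Rightarrow> bool" where
  "zploc p r \<longleftrightarrow> (\<exists>m n :: int. n \<noteq> 0 \<and> \<not> (int p dvd n) \<and> r = of_int m / of_int n)"

definition zploc_poly :: "nat \<Rightarrow> rat poly \<Rightarrow> bool" where
  "zploc_poly p c \<longleftrightarrow> (\<forall>n. zploc p (coeff c n))"

definition vp :: "int \<Rightarrow> rat poly" where
  "vp s = (if s < 0 then 0 else monom 1 (nat s))"

definition cst :: "rat \<Rightarrow> rat poly" where
  "cst r = [:r:]"

text \<open>the symbol [i,j] = alpha_i (x) e_j, zero if i <= 0 or j <= 0\<close>
definition br :: "int \<Rightarrow> int \<Rightarrow> elt" where
  "br i j = (\<lambda>q. if q = (i, j) \<and> i \<ge> 1 \<and> j \<ge> 1 then 1 else 0)"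

definition sc :: "rat poly \<Rightarrow> elt \<Rightarrow> elt" where
  "sc c x = (\<lambda>q. c * x q)"

definition eadd :: "elt \<Rightarrow> elt \<Rightarrow> elt" where
  "eadd x y = (\<lambda>q. x q + y q)"

definition esum :: "('i \<Rightarrow> elt) \<Rightarrow> 'i set \<Rightarrow> elt" where
  "esum f I = (\<lambda>q. \<Sum>i\<in>I. f i q)"

definition acoef :: "nat \<Rightarrow> int \<Rightarrow> nat \<Rightarrow> rat poly" where
  "acoef p t m = cst (of_nat (p ^ m choose nat (t + 1))) * vp t"

definition rel :: "nat \<Rightarrow> int \<Rightarrow> int \<Rightarrow> elt" where
  "rel p i j = esum (\<lambda>t. sc (acoef p t 2) (br i (j - t))) {0 .. int (p ^ 2) - 1}"

inductive_set relspan :: "nat \<Rightarrow> elt set" for p :: nat where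
  zero: "(\<lambda>q. 0) \<in> relspan p"
| step: "x \<in> relspan p \<Longrightarrow> zploc_poly p c \<Longrightarrow> i \<ge> 1 \<Longrightarrow> j \<ge> 1
          \<Longrightarrow> (\<lambda>q. x q + c * rel p i j q) \<in> relspan p"

definition ku_eq :: "nat \<Rightarrow> elt \<Rightarrow> elt \<Rightarrow> bool" where
  "ku_eq p x y \<longleftrightarrow> (\<lambda>q. x q - y q) \<in> relspan p"

definition g1 :: "nat \<Rightarrow> int" where "g1 p = int p - 1"
definition g2 :: "nat \<Rightarrow> int" where "g2 p = int p ^ 2 - 1"

definition u1 :: "nat \<Rightarrow> rat" where
  "u1 p = of_nat (p ^ 2 choose p) / of_nat p"

definition Aterm :: "nat \<Rightarrow> int \<Rightarrow> int \<Rightarrow> elt" where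
  "Aterm p a b = esum (\<lambda>i. sc (cst (of_nat (p ^ 2 choose nat (i + 1))) * vp i) (br a (b - i)))
                      {1 .. int p - 2}"

definition Bterm :: "nat \<Rightarrow> int \<Rightarrow> int \<Rightarrow> elt" where
  "Bterm p a b = esum (\<lambda>i. sc (cst (of_nat (p ^ 2 choose nat (i + 1))) * vp i) (br a (b - i)))
                      {int p .. int p ^ 2 - 2}"

definition AB :: "nat \<Rightarrow> int \<Rightarrow> int \<Rightarrow> elt" where
  "AB p a b = eadd (Aterm p a b) (Bterm p a b)"

fun cc :: "nat \<Rightarrow> int \<Rightarrow> int" and dd :: "nat \<Rightarrow> int \<Rightarrow> int" where
  "cc 0 t = 0"
| "cc (Suc 0) t = 0"
| "cc (Suc (Suc 0)) t = (if t = 0 then 1 else 0)"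
| "cc (Suc (Suc (Suc k))) t =
     (if t < 0 then 0 else if t = 0 then 1 else dd (Suc (Suc k)) (t - 1) + cc (Suc (Suc k)) t)"
| "dd 0 t = 0"
| "dd (Suc 0) t = 0"
| "dd (Suc (Suc 0)) t = (if t = 0 then 1 else 0)"
| "dd (Suc (Suc (Suc k))) t =
     (if t < 0 then 0 else if t = 0 then 1 else cc (Suc (Suc k)) t)"

definition cT :: "nat \<Rightarrow> int \<Rightarrow> rat" where
  "cT p t = (-1) powi (t + 1) * u1 p powi t"

definition cP :: "int \<Rightarrow> rat" where
  "cP t = (-1) powi (t + 1) * of_int (cc (nat (2 * t + 1)) t)"

definition cRT :: "nat \<Rightarrow> int \<Rightarrow> int \<Rightarrow> rat" where
  "cRT p r t = (-1) powi (t + r + 1) * u1 p powi t * of_int (cc (nat (t + 2 * r + 1)) r)"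

end

theory Submission
  imports Defs
begin

text \<open>Identify the element \<Sum>_n m_n v^n [a, b - n] with the polynomial m in v (this is
  diag a b m below). The relation \<alpha>_a \<otimes> R_b becomes R = \<Sum>_t binom(p^2, t + 1) v^t, which
  splits as R = P^2 + z P + y + w with P = p, z = u_1 v^g_1, y = v^g_2 and w = A + B. The theorem
  is then division with remainder of P^(k+1) by R, viewed as a monic quadratic in P: multiplying
  P^(k+1) \<equiv> \<Gamma>_k P + \<Delta>_k + \<Sigma>_k by P and replacing P^2 by -(z P + y + w) gives
  \<Gamma>_(k+1) = \<Delta>_k - z \<Gamma>_k, \<Delta>_(k+1) = -y \<Gamma>_k and \<Sigma>_(k+1) = P \<Sigma>_k - w \<Gamma>_k, which are exactly the
  recursions defining c_k(t) and d_k(t). The quotient has integer coefficients, so the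
  difference is a ku_*-combination of relations.\<close>

section \<open>The integers c_k(t) and d_k(t)\<close>

lemma cc_neg: "t < 0 \<Longrightarrow> cc n t = 0" and dd_neg: "t < 0 \<Longrightarrow> dd n t = 0"
  by (induction n t and n t rule: cc_dd.induct) auto

lemma cc_0: "2 \<le> n \<Longrightarrow> cc n 0 = 1" and dd_0: "2 \<le> n \<Longrightarrow> dd n 0 = 1"
  by (induction n "0::int" and n "0::int" rule: cc_dd.induct) auto

lemma cc_Suc: "2 \<le> n \<Longrightarrow> cc (Suc n) t = dd n (t - 1) + cc n t"
  and dd_Suc: "2 \<le> n \<Longrightarrow> dd (Suc n) t = cc n t"
proof -
  assume "2 \<le> n"
  then obtain m where "n = Suc (Suc m)" by (metis add_2_eq_Suc le_Suc_ex)
  then show "cc (Suc n) t = dd n (t - 1) + cc n t" "dd (Suc n) t = cc n t"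
    by (auto simp: cc_neg dd_neg dd_0 cc_0)
qed

lemma cc_dd_eq_0: "1 \<le> t \<Longrightarrow> (int n \<le> 2 * t \<longrightarrow> cc n t = 0) \<and> (int n \<le> 2 * t + 1 \<longrightarrow> dd n t = 0)"
proof (induction n arbitrary: t)
  case (Suc n)
  show ?case
  proof (cases "2 \<le> n")
    case True
    with Suc show ?thesis by (auto simp: cc_Suc dd_Suc)
  next
    case False
    then have "n = 0 \<or> n = 1" by auto
    with Suc.prems show ?thesis by auto
  qed
qed simp

section \<open>Division by a monic quadratic\<close>

text \<open>P^(k+1) \<equiv> rem_lin * P + rem_const + rem_tail modulo P^2 + z P + y + w, with quotient rem_quot.\<close>

definition rem_lin :: "'a::comm_ring_1 \<Rightarrow> 'a \<Rightarrow> int \<Rightarrow> 'a" where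
  "rem_lin z y k = (\<Sum>t = 0..k. of_int ((-1) ^ nat (k + t) * cc (nat (k + 1)) t)
                                 * z ^ nat (k - 2 * t) * y ^ nat t)"

definition rem_const :: "'a::comm_ring_1 \<Rightarrow> 'a \<Rightarrow> int \<Rightarrow> 'a" where
  "rem_const z y k = (\<Sum>t = 0..k. of_int ((-1) ^ nat (k + t) * dd (nat (k + 1)) t)
                                   * z ^ nat (k - 2 * t - 1) * y ^ nat (t + 1))"

text \<open>The case r = t = 0 is separate because the general formula would give c_1(0) = 0.\<close>

definition tail_coeff :: "int \<Rightarrow> int \<Rightarrow> int" where
  "tail_coeff r t = (if r = 0 \<and> t = 0 then -1 else (-1) ^ nat (t + r + 1) * cc (nat (t + 2 * r + 1)) r)"

definition rem_tail :: "'a::comm_ring_1 \<Rightarrow> 'a \<Rightarrow> 'a \<Rightarrow> 'a \<Rightarrow> int \<Rightarrow> 'a" where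
  "rem_tail P z y w k = (\<Sum>r = 0..k. \<Sum>t = 0..k. if 2 * r + t \<le> k - 1 then
      of_int (tail_coeff r t) * z ^ nat t * y ^ nat r * P ^ nat (k - 1 - 2 * r - t) * w else 0)"

primrec rem_quot :: "'a::comm_ring_1 \<Rightarrow> 'a \<Rightarrow> 'a \<Rightarrow> nat \<Rightarrow> 'a" where
  "rem_quot P z y 0 = 1"
| "rem_quot P z y (Suc n) = P * rem_quot P z y n + rem_lin z y (int n + 1)"

lemma sum_int_shift: "sum f {(a::int) + 1..b + 1} = (\<Sum>t = a..b. f (t + 1))"
  by (rule sum.reindex_bij_witness[of _ "\<lambda>t. t + 1" "\<lambda>t. t - 1"]) auto

lemma rem_const_succ:
  fixes z y :: "'a::comm_ring_1"
  assumes k: "1 \<le> k"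
  shows "rem_const z y (k + 1) = - (y * rem_lin z y k)"
proof -
  have split: "{0..k + 1} = insert (k + 1) {0..k}" using k by auto
  have top: "dd (nat (k + 1 + 1)) (k + 1) = 0" using k by (simp add: cc_dd_eq_0)
  have "rem_const z y (k + 1) = (\<Sum>t = 0..k. of_int ((-1) ^ nat (k + 1 + t) * dd (nat (k + 1 + 1)) t)
                     * z ^ nat (k + 1 - 2 * t - 1) * y ^ nat (t + 1))"
    unfolding rem_const_def split using top by simp
  also have "\<dots> = (\<Sum>t = 0..k. - (y * (of_int ((-1) ^ nat (k + t) * cc (nat (k + 1)) t)
                     * z ^ nat (k - 2 * t) * y ^ nat t)))"
  proof (rule sum.cong[OF refl])
    fix t assume t: "t \<in> {0..k}"
    have "nat (k + 1 + t) = Suc (nat (k + t))" "nat (t + 1) = Suc (nat t)"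
         "nat (k + 1 + 1) = Suc (nat (k + 1))" using t k by auto
    then show "of_int ((-1) ^ nat (k + 1 + t) * dd (nat (k + 1 + 1)) t)
                 * z ^ nat (k + 1 - 2 * t - 1) * y ^ nat (t + 1)
             = - (y * (of_int ((-1) ^ nat (k + t) * cc (nat (k + 1)) t) * z ^ nat (k - 2 * t) * y ^ nat t))"
      using k by (simp add: dd_Suc algebra_simps)
  qed
  also have "\<dots> = - (y * rem_lin z y k)"
    unfolding rem_lin_def by (simp add: sum_distrib_left sum_negf)
  finally show ?thesis .
qed

lemma rem_const_as_shifted_sum:
  fixes z y :: "'a::comm_ring_1"
  assumes k: "1 \<le> k"
  shows "(\<Sum>t = 0..k + 1. of_int ((-1) ^ nat (k + 1 + t) * dd (nat (k + 1)) (t - 1))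
                           * z ^ nat (k + 1 - 2 * t) * y ^ nat t) = rem_const z y k"
    (is "sum ?A _ = _")
proof -
  have "{0..k + 1} = insert 0 {1..k + 1}" using k by auto
  moreover have "?A 0 = 0" by (simp add: dd_neg)
  ultimately have "sum ?A {0..k + 1} = (\<Sum>t = 0..k. ?A (t + 1))"
    using sum_int_shift[of ?A 0 k] by simp
  also have "\<dots> = rem_const z y k" unfolding rem_const_def
  proof (rule sum.cong[OF refl])
    fix t assume "t \<in> {0..k}"
    then have "nat (k + 1 + (t + 1)) = Suc (Suc (nat (k + t)))" using k by auto
    then show "?A (t + 1) = of_int ((-1) ^ nat (k + t) * dd (nat (k + 1)) t)
                              * z ^ nat (k - 2 * t - 1) * y ^ nat (t + 1)"
      by (simp add: algebra_simps)
  qed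
  finally show ?thesis .
qed

lemma z_times_rem_lin:
  fixes z y :: "'a::comm_ring_1"
  assumes k: "1 \<le> k"
  shows "(\<Sum>t = 0..k + 1. of_int ((-1) ^ nat (k + 1 + t) * cc (nat (k + 1)) t)
                           * z ^ nat (k + 1 - 2 * t) * y ^ nat t) = - (z * rem_lin z y k)"
    (is "sum ?B _ = _")
proof -
  have "{0..k + 1} = insert (k + 1) {0..k}" using k by auto
  moreover have "?B (k + 1) = 0" using k by (simp add: cc_dd_eq_0)
  ultimately have "sum ?B {0..k + 1} = sum ?B {0..k}" by simp
  also have "\<dots> = (\<Sum>t = 0..k. - (z * (of_int ((-1) ^ nat (k + t) * cc (nat (k + 1)) t)
                                     * z ^ nat (k - 2 * t) * y ^ nat t)))"
  proof (rule sum.cong[OF refl])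
    fix t assume t: "t \<in> {0..k}"
    show "?B t = - (z * (of_int ((-1) ^ nat (k + t) * cc (nat (k + 1)) t)
                         * z ^ nat (k - 2 * t) * y ^ nat t))"
    proof (cases "2 * t \<le> k")
      case True
      then have "nat (k + 1 + t) = Suc (nat (k + t))" "nat (k + 1 - 2 * t) = Suc (nat (k - 2 * t))"
        using t by auto
      then show ?thesis by (simp add: algebra_simps)
    next
      case False
      then have "cc (nat (k + 1)) t = 0" using t by (simp add: cc_dd_eq_0)
      then show ?thesis by simp
    qed
  qed
  also have "\<dots> = - (z * rem_lin z y k)"
    unfolding rem_lin_def by (simp add: sum_distrib_left sum_negf)
  finally show ?thesis .
qed

lemma rem_lin_succ:
  fixes z y :: "'a::comm_ring_1"
  assumes k: "1 \<le> k"
  shows "rem_lin z y (k + 1) = rem_const z y k - z * rem_lin z y k"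
proof -
  have "nat (k + 1 + 1) = Suc (nat (k + 1))" using k by auto
  then have "rem_lin z y (k + 1)
      = (\<Sum>t = 0..k + 1. of_int ((-1) ^ nat (k + 1 + t) * dd (nat (k + 1)) (t - 1))
                           * z ^ nat (k + 1 - 2 * t) * y ^ nat t)
        + (\<Sum>t = 0..k + 1. of_int ((-1) ^ nat (k + 1 + t) * cc (nat (k + 1)) t)
                           * z ^ nat (k + 1 - 2 * t) * y ^ nat t)"
    unfolding rem_lin_def sum.distrib[symmetric] using k
    by (intro sum.cong) (auto simp: cc_Suc algebra_simps)
  then show ?thesis
    unfolding rem_const_as_shifted_sum[OF k] z_times_rem_lin[OF k] by simp
qed

lemma tail_coeff_diagonal:
  assumes "1 \<le> k" "0 \<le> r" "2 * r \<le> k"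
  shows "tail_coeff r (k - 2 * r) = - ((-1) ^ nat (k + r) * cc (nat (k + 1)) r)"
proof -
  have "tail_coeff r (k - 2 * r) = (-1) ^ nat (k - r + 1) * cc (nat (k + 1)) r"
    using assms unfolding tail_coeff_def by (auto simp: algebra_simps)
  moreover have "(-1::int) ^ nat (k - r + 1) = - ((-1) ^ nat (k + r))"
    unfolding minus_one_power_iff using assms by (auto simp: even_nat_iff)
  ultimately show ?thesis by simp
qed

lemma w_times_rem_lin:
  fixes z y w :: "'a::comm_ring_1"
  assumes k: "1 \<le> k"
  shows "(\<Sum>r = 0..k. if 0 \<le> k - 2 * r
            then of_int (tail_coeff r (k - 2 * r)) * z ^ nat (k - 2 * r) * y ^ nat r * w else 0)
         = - (w * rem_lin z y k)"
  unfolding rem_lin_def sum_distrib_left sum_negf[symmetric]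
proof (rule sum.cong[OF refl])
  fix r assume r: "r \<in> {0..k}"
  show "(if 0 \<le> k - 2 * r then of_int (tail_coeff r (k - 2 * r)) * z ^ nat (k - 2 * r) * y ^ nat r * w
         else 0)
      = - (w * (of_int ((-1) ^ nat (k + r) * cc (nat (k + 1)) r) * z ^ nat (k - 2 * r) * y ^ nat r))"
  proof (cases "2 * r \<le> k")
    case True
    moreover have "tail_coeff r (k - 2 * r) = - ((-1) ^ nat (k + r) * cc (nat (k + 1)) r)"
      using r k True by (simp add: tail_coeff_diagonal)
    ultimately show ?thesis by (simp add: algebra_simps)
  next
    case False
    then have "cc (nat (k + 1)) r = 0" using r by (simp add: cc_dd_eq_0)
    with False show ?thesis by simp
  qed
qed

lemma rem_tail_succ:
  fixes P z y w :: "'a::comm_ring_1"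
  assumes k: "1 \<le> k"
  shows "rem_tail P z y w (k + 1) = P * rem_tail P z y w k - w * rem_lin z y k"
proof -
  define F where "F r t = (if 2 * r + t \<le> k then of_int (tail_coeff r t) * z ^ nat t
                             * y ^ nat r * P ^ nat (k - 2 * r - t) * w else 0)" for r t
  define G where "G r t = (if 2 * r + t \<le> k - 1 then of_int (tail_coeff r t) * z ^ nat t
                             * y ^ nat r * P ^ nat (k - 1 - 2 * r - t) * w else 0)" for r t
  define H where "H r t = of_int (tail_coeff r t) * z ^ nat t * y ^ nat r * w" for r t
  have split: "{0..k + 1} = insert (k + 1) {0..k}" using k by auto
  have "k + 1 - 1 = k" by simp
  then have "rem_tail P z y w (k + 1) = (\<Sum>r = 0..k + 1. \<Sum>t = 0..k + 1. F r t)"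
    unfolding rem_tail_def F_def by presburger
  also have "\<dots> = (\<Sum>r = 0..k. \<Sum>t = 0..k. F r t)"
    unfolding split using k by (simp add: F_def)
  also have "\<dots> = (\<Sum>r = 0..k. \<Sum>t = 0..k. P * G r t + (if t = k - 2 * r then H r t else 0))"
  proof (intro sum.cong refl)
    fix r t assume "r \<in> {0..k}" "t \<in> {0..k}"
    show "F r t = P * G r t + (if t = k - 2 * r then H r t else 0)"
    proof (cases "2 * r + t \<le> k - 1")
      case True
      then have "nat (k - 2 * r - t) = Suc (nat (k - 1 - 2 * r - t))" by auto
      with True show ?thesis unfolding F_def G_def by (simp add: algebra_simps)
    qed (auto simp: F_def G_def H_def)
  qed
  also have "\<dots> = P * rem_tail P z y w k + (\<Sum>r = 0..k. if 0 \<le> k - 2 * r then H r (k - 2 * r) else 0)"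
    unfolding rem_tail_def G_def
    by (simp add: sum.distrib sum_distrib_left sum.delta)
  also have "(\<Sum>r = 0..k. if 0 \<le> k - 2 * r then H r (k - 2 * r) else 0) = - (w * rem_lin z y k)"
    unfolding H_def by (rule w_times_rem_lin[OF k])
  finally show ?thesis by simp
qed

lemma power_eq_rem_plus_quot:
  fixes P z y w :: "'a::comm_ring_1"
  shows "P ^ (n + 2) = rem_lin z y (int n + 1) * P + rem_const z y (int n + 1)
           + rem_tail P z y w (int n + 1) + rem_quot P z y n * (P ^ 2 + z * P + y + w)"
proof (induction n)
  case 0
  have "{0..1::int} = {0, 1}" by auto
  then show ?case
    by (simp add: rem_lin_def rem_const_def rem_tail_def tail_coeff_def cc_dd_eq_0 cc_0 dd_0
                  algebra_simps power2_eq_square)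
next
  case (Suc n)
  define k where "k = int n + 1"
  have k: "1 \<le> k" "int (Suc n) + 1 = k + 1" unfolding k_def by simp_all
  have "P ^ (Suc n + 2) = P * P ^ (n + 2)" by simp
  then show ?case
    unfolding Suc.IH k(2) rem_quot.simps rem_lin_succ[OF k(1)] rem_const_succ[OF k(1)]
      rem_tail_succ[OF k(1)] k_def[symmetric]
    by (simp add: algebra_simps power2_eq_square)
qed

section \<open>Elements along a diagonal\<close>

lemma vp_0 [simp]: "vp 0 = 1"
  by (simp add: vp_def)

lemma vp_add: "0 \<le> s \<Longrightarrow> 0 \<le> s' \<Longrightarrow> vp (s + s') = vp s * vp s'"
  unfolding vp_def by (simp add: mult_monom nat_add_distrib)

lemma vp_mult: "0 \<le> n \<Longrightarrow> 0 \<le> s \<Longrightarrow> vp (n * s) = vp s ^ nat n"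
  unfolding vp_def by (simp add: monom_power nat_mult_distrib mult.commute not_less)

lemma cst_mult_vp: "0 \<le> s \<Longrightarrow> cst c * vp s = monom c (nat s)"
  unfolding cst_def vp_def by (simp add: smult_monom)

text \<open>diag a b m is \<Sum>_n m_n v^n [a, b - n]; it is a finite sum since [a, j] = 0 for j \<le> 0.\<close>

definition diag :: "int \<Rightarrow> int \<Rightarrow> rat poly \<Rightarrow> elt" where
  "diag a b m = (\<lambda>q. if fst q = a \<and> 1 \<le> a \<and> 1 \<le> snd q \<and> snd q \<le> b
                     then monom (coeff m (nat (b - snd q))) (nat (b - snd q)) else 0)"

lemma diag_0: "diag a b 0 = (\<lambda>q. 0)"
  unfolding diag_def by auto

lemma eadd_diag: "eadd (diag a b f) (diag a b g) = diag a b (f + g)"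
  unfolding diag_def eadd_def by (auto simp: add_monom)

lemma diag_diff: "(\<lambda>q. diag a b f q - diag a b g q) = diag a b (f - g)"
  unfolding diag_def by (auto simp: diff_monom)

lemma esum_diag: "esum (\<lambda>i. diag a b (f i)) I = diag a b (sum f I)"
proof (induction I rule: infinite_finite_induct)
  case (insert i I)
  then show ?case by (simp add: esum_def eadd_def fun_eq_iff flip: eadd_diag)
qed (simp_all add: diag_0 esum_def)

lemma sc_diag: "sc (cst c * vp s) (diag a (b - s) m) = diag a b ([:c:] * vp s * m)"
proof (cases "0 \<le> s")
  case True
  have shift: "[:c:] * vp s * m = monom c (nat s) * m"
    using cst_mult_vp[OF True] by (simp add: cst_def)
  show ?thesis unfolding cst_mult_vp[OF True] shift
  proof
    fix q :: "int \<times> int"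
    obtain i j where q: "q = (i, j)" by fastforce
    show "sc (monom c (nat s)) (diag a (b - s) m) q = diag a b (monom c (nat s) * m) q"
    proof (cases "j \<le> b - s")
      case True
      then have "nat (b - j) = nat s + nat (b - s - j)" "j \<le> b" using \<open>0 \<le> s\<close> by auto
      with True show ?thesis unfolding q sc_def diag_def by (simp add: coeff_monom_mult mult_monom)
    next
      case False
      then have "j \<le> b \<Longrightarrow> nat (b - j) < nat s" by auto
      with False show ?thesis unfolding q sc_def diag_def by (simp add: coeff_monom_mult)
    qed
  qed
qed (simp add: vp_def sc_def diag_0)

lemma br_eq_diag: "br a b = diag a b 1"
  unfolding br_def diag_def by (auto simp: coeff_1)

lemma sc_br_eq_diag: "sc (cst c * vp s) (br a (b - s)) = diag a b ([:c:] * vp s)"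
  using sc_diag[of c s a b 1] by (simp add: br_eq_diag)

lemma sc_cst_br_eq_diag: "sc (cst c) (br a b) = diag a b [:c:]"
  using sc_br_eq_diag[of c 0 a b] by simp

lemma sc_br_eq_diag2:
  "sc (cst c * vp s * vp s') (br a (b - (s + s'))) = diag a b ([:c:] * vp s * vp s')"
proof (cases "0 \<le> s \<and> 0 \<le> s'")
  case True
  then show ?thesis using sc_br_eq_diag[of c "s + s'" a b] by (simp add: vp_add mult.assoc)
next
  case False
  then show ?thesis by (auto simp: vp_def sc_def diag_0)
qed

section \<open>The relation polynomial\<close>

definition rel_poly :: "nat \<Rightarrow> rat poly" where
  "rel_poly p = (\<Sum>t = 0..int (p ^ 2) - 1. [:of_nat (p ^ 2 choose nat (t + 1)):] * vp t)"

definition AB_poly :: "nat \<Rightarrow> rat poly" where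
  "AB_poly p = (\<Sum>i = 1..int p - 2. [:of_nat (p ^ 2 choose nat (i + 1)):] * vp i)
             + (\<Sum>i = int p..int p ^ 2 - 2. [:of_nat (p ^ 2 choose nat (i + 1)):] * vp i)"

lemma rel_eq_diag: "rel p i j = diag i j (rel_poly p)"
  unfolding rel_def acoef_def rel_poly_def esum_diag[symmetric]
  by (simp add: sc_br_eq_diag)

lemma sc_AB_eq_diag: "sc (cst c * vp s) (AB p a (b - s)) = diag a b ([:c:] * vp s * AB_poly p)"
proof -
  have "AB p a b = diag a b (AB_poly p)" for b
    unfolding AB_def Aterm_def Bterm_def AB_poly_def eadd_diag[symmetric] esum_diag[symmetric]
    by (simp only: sc_br_eq_diag)
  then show ?thesis by (simp add: sc_diag)
qed

definition int_coeffs :: "rat poly \<Rightarrow> bool" where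
  "int_coeffs f \<longleftrightarrow> (\<forall>n. coeff f n \<in> \<int>)"

lemma int_coeffs_add: "int_coeffs f \<Longrightarrow> int_coeffs g \<Longrightarrow> int_coeffs (f + g)"
  unfolding int_coeffs_def by simp

lemma int_coeffs_mult: "int_coeffs f \<Longrightarrow> int_coeffs g \<Longrightarrow> int_coeffs (f * g)"
  unfolding int_coeffs_def coeff_mult by (auto intro!: Ints_sum Ints_mult)

lemma int_coeffs_1: "int_coeffs 1"
  unfolding int_coeffs_def by (simp add: coeff_1)

lemma int_coeffs_power: "int_coeffs f \<Longrightarrow> int_coeffs (f ^ n)"
  by (induction n) (simp_all add: int_coeffs_mult int_coeffs_1)

lemma int_coeffs_sum: "(\<And>i. i \<in> I \<Longrightarrow> int_coeffs (f i)) \<Longrightarrow> int_coeffs (sum f I)"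
  unfolding int_coeffs_def by (auto simp: coeff_sum intro!: Ints_sum)

lemma int_coeffs_const: "c \<in> \<int> \<Longrightarrow> int_coeffs [:c:]"
  unfolding int_coeffs_def by (simp add: coeff_pCons split: nat.split)

lemma int_coeffs_of_int: "int_coeffs (of_int i)"
  by (simp add: of_int_poly int_coeffs_const)

lemma int_coeffs_vp: "int_coeffs (vp s)"
  unfolding int_coeffs_def vp_def by (auto simp: coeff_monom)

lemma zploc_Ints:
  assumes "prime p" "r \<in> \<int>"
  shows "zploc p r"
proof -
  obtain m where "r = of_int m" using assms(2) by (auto elim: Ints_cases)
  moreover have "\<not> int p dvd 1" using prime_gt_1_nat[OF assms(1)] by simp
  ultimately show ?thesis unfolding zploc_def by (intro exI[of _ m] exI[of _ 1]) auto
qed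

lemma relspan_add_rel:
  assumes "x \<in> relspan p" "zploc_poly p c"
  shows "(\<lambda>q. x q + c * rel p i j q) \<in> relspan p"
proof (cases "1 \<le> i \<and> 1 \<le> j")
  case False
  then have "rel p i j = (\<lambda>q. 0)" by (auto simp: rel_eq_diag diag_def)
  then show ?thesis using assms by simp
qed (use assms in \<open>auto intro: relspan.step\<close>)

lemma relspan_sum_rel:
  assumes "finite S" "\<And>s. s \<in> S \<Longrightarrow> zploc_poly p (c s)"
  shows "(\<lambda>q. \<Sum>s\<in>S. c s * rel p i (j s) q) \<in> relspan p"
  using assms
proof (induction S rule: finite_induct)
  case empty
  show ?case using relspan.zero by simp
next
  case (insert s S)
  then have "(\<lambda>q. (\<Sum>s\<in>S. c s * rel p i (j s) q) + c s * rel p i (j s) q) \<in> relspan p"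
    by (intro relspan_add_rel) auto
  with insert show ?case by (simp add: add.commute)
qed

lemma diag_mult_rel_poly_in_relspan:
  assumes p: "prime p" and m: "int_coeffs m"
  shows "diag a b (m * rel_poly p) \<in> relspan p"
proof -
  have "m * rel_poly p = (\<Sum>n\<le>degree m. [:coeff m n:] * vp (int n) * rel_poly p)"
    by (subst (1) poly_as_sum_of_monoms[symmetric]) (simp add: sum_distrib_right vp_def smult_monom)
  then have "diag a b (m * rel_poly p)
             = (\<lambda>q. \<Sum>n\<le>degree m. (cst (coeff m n) * vp (int n)) * rel p a (b - int n) q)"
    by (simp only: esum_diag[symmetric] sc_diag[symmetric] rel_eq_diag esum_def sc_def)
  also have "\<dots> \<in> relspan p"
  proof (rule relspan_sum_rel)
    fix n
    have "zploc p (coeff m n)" using m p zploc_Ints unfolding int_coeffs_def by blast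
    then show "zploc_poly p (cst (coeff m n) * vp (int n))"
      using p by (auto simp: cst_mult_vp zploc_poly_def coeff_monom zploc_Ints)
  qed simp
  finally show ?thesis .
qed

lemma u1_eq_binomial: "prime p \<Longrightarrow> u1 p = of_nat ((p^2 - 1) choose (p - 1))"
  and binomial_p2_p: "prime p \<Longrightarrow> of_nat (p ^ 2 choose p) = u1 p * of_nat p"
proof -
  assume "prime p"
  then have p: "2 \<le> p" by (rule prime_ge_2_nat)
  have "Suc (p - 1) * (Suc (p^2 - 1) choose Suc (p - 1)) = Suc (p^2 - 1) * ((p^2 - 1) choose (p - 1))"
    by (rule Suc_times_binomial)
  moreover have "Suc (p - 1) = p" "Suc (p^2 - 1) = p^2" using p by auto
  ultimately have "p * (p^2 choose p) = p * (p * ((p^2 - 1) choose (p - 1)))"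
    by (simp add: power2_eq_square)
  then have c: "p^2 choose p = p * ((p^2 - 1) choose (p - 1))" using p by simp
  show "u1 p = of_nat ((p^2 - 1) choose (p - 1))" unfolding u1_def c using p by simp
  then show "of_nat (p ^ 2 choose p) = u1 p * of_nat p" unfolding c by simp
qed

lemma rel_poly_split:
  assumes "prime p"
  shows "rel_poly p = [:of_nat p:] ^ 2 + [:u1 p:] * vp (g1 p) * [:of_nat p:] + vp (g2 p) + AB_poly p"
proof -
  define f where "f t = [:of_nat (p ^ 2 choose nat (t + 1)):] * vp t" for t
  define q where "q = int p"
  define Q where "Q = int p ^ 2"
  have p: "2 \<le> p" using assms by (rule prime_ge_2_nat)
  then have q: "2 \<le> q" "2 * q \<le> Q" unfolding q_def Q_def by (simp_all add: power2_eq_square)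
  then have "{0..Q - 1} = insert 0 (insert (q - 1) (insert (Q - 1) ({1..q - 2} \<union> {q..Q - 2})))"
    by auto
  moreover have "int (p ^ 2) = Q" "q ^ 2 = Q" unfolding Q_def q_def by simp_all
  ultimately have "rel_poly p = f 0 + f (q - 1) + f (Q - 1) + AB_poly p"
    unfolding rel_poly_def AB_poly_def f_def[symmetric] Q_def[symmetric] q_def[symmetric] using q
    by (simp add: sum.union_disjoint add.assoc)
  moreover have "f 0 = [:of_nat p:] ^ 2" unfolding f_def by (simp add: poly_const_pow)
  moreover have "f (q - 1) = [:u1 p:] * vp (g1 p) * [:of_nat p:]"
    using binomial_p2_p[OF assms] by (simp add: f_def g1_def q_def mult_to_poly mult.commute)
  moreover have "f (Q - 1) = vp (g2 p)"
    by (simp add: f_def g2_def Q_def nat_power_eq)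
  ultimately show ?thesis by simp
qed

lemma int_coeffs_rem_lin: "int_coeffs z \<Longrightarrow> int_coeffs y \<Longrightarrow> int_coeffs (rem_lin z y k)"
  unfolding rem_lin_def
  by (intro int_coeffs_sum int_coeffs_mult int_coeffs_power int_coeffs_of_int)

lemma int_coeffs_rem_quot:
  "int_coeffs P \<Longrightarrow> int_coeffs z \<Longrightarrow> int_coeffs y \<Longrightarrow> int_coeffs (rem_quot P z y n)"
  by (induction n) (simp_all add: int_coeffs_add int_coeffs_mult int_coeffs_rem_lin int_coeffs_1)

lemma ku_eq_power_rem:
  assumes p: "prime p" and k: "2 \<le> k"
  defines "P \<equiv> [:of_nat p:]" and "z \<equiv> [:u1 p:] * vp (g1 p)" and "y \<equiv> vp (g2 p)"
  shows "ku_eq p (diag a b (P ^ nat (k + 1)))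
                 (diag a b (rem_lin z y k * P + rem_const z y k + rem_tail P z y (AB_poly p) k))"
proof -
  define n where "n = nat k - 1"
  have n: "k = int n + 1" "nat (k + 1) = n + 2" using k unfolding n_def by auto
  have "P ^ nat (k + 1) = rem_lin z y k * P + rem_const z y k + rem_tail P z y (AB_poly p) k
                          + rem_quot P z y n * rel_poly p"
    using power_eq_rem_plus_quot[of P n z y "AB_poly p"]
    unfolding n(2) n(1)[symmetric] rel_poly_split[OF p] P_def z_def y_def .
  moreover have "int_coeffs (rem_quot P z y n)"
    using u1_eq_binomial[OF p] unfolding P_def z_def y_def
    by (intro int_coeffs_rem_quot int_coeffs_mult int_coeffs_const int_coeffs_vp) auto
  ultimately show ?thesis
    unfolding ku_eq_def diag_diff by (simp add: diag_mult_rel_poly_in_relspan[OF p])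
qed

lemma sum_upto_half:
  fixes k :: int
  assumes "0 \<le> k" "\<And>t. k div 2 < t \<Longrightarrow> t \<le> k \<Longrightarrow> f t = 0"
  shows "sum f {0..k} = f 0 + sum f {1..k div 2}"
proof -
  have "sum f {0..k} = sum f {0..k div 2}"
    using assms(2) by (intro sum.mono_neutral_right) auto
  also have "{0..k div 2} = insert 0 {1..k div 2}" using assms(1) by auto
  finally show ?thesis by simp
qed

lemma sum_triangle_split:
  fixes F :: "int \<Rightarrow> int \<Rightarrow> 'a::comm_monoid_add"
  assumes k: "2 \<le> k"
  shows "(\<Sum>r = 0..k. \<Sum>t = 0..k. if 2 * r + t \<le> k - 1 then F r t else 0)
       = (\<Sum>t = 0..k - 1. F 0 t) + (\<Sum>r = 1..(k - 1) div 2. F r 0)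
         + (\<Sum>r = 1..(k - 2) div 2. \<Sum>t = 1..k - 1 - 2 * r. F r t)"
proof -
  have split: "{0..k} = insert 0 {1..k}" using k by auto
  have row: "(\<Sum>t = 1..k. if t \<le> k - 1 then F 0 t else 0) = (\<Sum>t = 1..k - 1. F 0 t)"
    by (subst sum.inter_filter[symmetric]) (auto intro: sum.cong)
  have "{0..k - 1} = insert 0 {1..k - 1}" using k by auto
  then have row: "(\<Sum>t = 0..k - 1. F 0 t) = F 0 0 + (\<Sum>t = 1..k. if t \<le> k - 1 then F 0 t else 0)"
    unfolding row by simp
  have column: "(\<Sum>r = 1..k. if 2 * r + 0 \<le> k - 1 then F r 0 else 0) = (\<Sum>r = 1..(k - 1) div 2. F r 0)"
    by (subst sum.inter_filter[symmetric]) (auto intro!: sum.cong)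
  have inner: "(\<Sum>t = 1..k. if 2 * r + t \<le> k - 1 then F r t else 0)
             = (if r \<le> (k - 2) div 2 then \<Sum>t = 1..k - 1 - 2 * r. F r t else 0)" if "1 \<le> r" for r
    using that by (subst sum.inter_filter[symmetric]) (auto intro!: sum.cong sum.neutral)
  have "(\<Sum>r = 1..k. \<Sum>t = 1..k. if 2 * r + t \<le> k - 1 then F r t else 0)
      = (\<Sum>r = 1..k. if r \<le> (k - 2) div 2 then \<Sum>t = 1..k - 1 - 2 * r. F r t else 0)"
    by (rule sum.cong[OF refl]) (simp only: atLeastAtMost_iff inner)
  also have "\<dots> = (\<Sum>r \<in> {r \<in> {1..k}. r \<le> (k - 2) div 2}. \<Sum>t = 1..k - 1 - 2 * r. F r t)"
    by (rule sum.inter_filter[symmetric]) simp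
  also have "{r \<in> {1..k}. r \<le> (k - 2) div 2} = {1..(k - 2) div 2}" by auto
  finally have "(\<Sum>r = 1..k. \<Sum>t = 1..k. if 2 * r + t \<le> k - 1 then F r t else 0)
      = (\<Sum>r = 1..(k - 2) div 2. \<Sum>t = 1..k - 1 - 2 * r. F r t)" .
  then show ?thesis
    unfolding split sum.insert_if using k row column by (simp add: sum.distrib add_ac)
qed

lemma const_monomial_eq:
  "C = of_int c * u ^ e \<Longrightarrow> V = X ^ e * Y ^ f \<Longrightarrow> [:C:] * V = of_int c * ([:u:] * X) ^ e * Y ^ f"
  by (simp add: of_int_poly poly_const_pow mult_to_poly smult_power mult_ac)

lemma const_monomial_eq_scaled:
  "C = of_int c * u ^ e * q \<Longrightarrow> V = X ^ e * Y ^ f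
   \<Longrightarrow> [:C:] * V = of_int c * ([:u:] * X) ^ e * Y ^ f * [:q:]"
  by (simp add: of_int_poly poly_const_pow mult_to_poly smult_power mult_ac)

lemma g1_nonneg: "1 \<le> p \<Longrightarrow> 0 \<le> g1 p" and g2_nonneg: "1 \<le> p \<Longrightarrow> 0 \<le> g2 p"
  unfolding g1_def g2_def by (simp_all add: one_le_power)

lemma rem_lin_expansion:
  assumes p: "prime p" and k: "2 \<le> k"
  shows "rem_lin ([:u1 p:] * vp (g1 p)) (vp (g2 p)) k * [:of_nat p:]
       = [:(-1) powi k * u1 p powi k * of_nat p:] * vp (k * g1 p)
         + (\<Sum>t = 1..k div 2. [:of_int (cc (nat (k + 1)) t) * (-1) powi (k + t) * u1 p powi (k - 2 * t)
                                * of_nat p:] * vp ((k - 2 * t) * g1 p + t * g2 p))"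
proof -
  have g: "0 \<le> g1 p" "0 \<le> g2 p" using prime_ge_1_nat[OF p] by (simp_all add: g1_nonneg g2_nonneg)
  define f where "f t = of_int ((-1) ^ nat (k + t) * cc (nat (k + 1)) t)
      * ([:u1 p:] * vp (g1 p)) ^ nat (k - 2 * t) * vp (g2 p) ^ nat t * [:of_nat p:]" for t
  have "rem_lin ([:u1 p:] * vp (g1 p)) (vp (g2 p)) k * [:of_nat p:] = sum f {0..k}"
    unfolding rem_lin_def f_def by (simp only: sum_distrib_right)
  also have "\<dots> = f 0 + sum f {1..k div 2}"
    by (rule sum_upto_half) (use k in \<open>auto simp: f_def cc_dd_eq_0\<close>)
  also have "f 0 = [:(-1) powi k * u1 p powi k * of_nat p:] * vp (k * g1 p)"
    unfolding f_def
    by (rule const_monomial_eq_scaled[symmetric]) (use k g in \<open>simp_all add: power_int_def cc_0 vp_mult\<close>)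
  also have "sum f {1..k div 2} = (\<Sum>t = 1..k div 2. [:of_int (cc (nat (k + 1)) t) * (-1) powi (k + t)
                 * u1 p powi (k - 2 * t) * of_nat p:] * vp ((k - 2 * t) * g1 p + t * g2 p))"
  proof (rule sum.cong[OF refl])
    fix t assume "t \<in> {1..k div 2}"
    then have t: "0 \<le> t" "0 \<le> k - 2 * t" by auto
    show "f t = [:of_int (cc (nat (k + 1)) t) * (-1) powi (k + t) * u1 p powi (k - 2 * t) * of_nat p:]
                * vp ((k - 2 * t) * g1 p + t * g2 p)"
      unfolding f_def
      by (rule const_monomial_eq_scaled[symmetric]) (use t g in \<open>simp_all add: power_int_def vp_add vp_mult\<close>)
  qed
  finally show ?thesis .
qed

lemma rem_const_expansion:
  assumes p: "prime p" and k: "2 \<le> k"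
  shows "rem_const ([:u1 p:] * vp (g1 p)) (vp (g2 p)) k
       = [:(-1) powi k * u1 p powi (k - 1):] * vp ((k - 1) * g1 p + g2 p)
         + (\<Sum>t = 1..k div 2. [:of_int (dd (nat (k + 1)) t) * (-1) powi (k + t) * u1 p powi (k - 2 * t - 1):]
                              * vp ((k - 2 * t - 1) * g1 p) * vp ((t + 1) * g2 p))"
proof -
  have g: "0 \<le> g1 p" "0 \<le> g2 p" using prime_ge_1_nat[OF p] by (simp_all add: g1_nonneg g2_nonneg)
  define f where "f t = of_int ((-1) ^ nat (k + t) * dd (nat (k + 1)) t)
      * ([:u1 p:] * vp (g1 p)) ^ nat (k - 2 * t - 1) * vp (g2 p) ^ nat (t + 1)" for t
  have "rem_const ([:u1 p:] * vp (g1 p)) (vp (g2 p)) k = sum f {0..k}"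
    unfolding rem_const_def f_def ..
  also have "\<dots> = f 0 + sum f {1..k div 2}"
    by (rule sum_upto_half) (use k in \<open>auto simp: f_def cc_dd_eq_0\<close>)
  also have "f 0 = [:(-1) powi k * u1 p powi (k - 1):] * vp ((k - 1) * g1 p + g2 p)"
    unfolding f_def
    by (rule const_monomial_eq[symmetric]) (use k g in \<open>simp_all add: power_int_def dd_0 vp_add vp_mult\<close>)
  also have "sum f {1..k div 2} = (\<Sum>t = 1..k div 2. [:of_int (dd (nat (k + 1)) t) * (-1) powi (k + t)
                 * u1 p powi (k - 2 * t - 1):] * vp ((k - 2 * t - 1) * g1 p) * vp ((t + 1) * g2 p))"
  proof (rule sum.cong[OF refl])
    fix t assume t: "t \<in> {1..k div 2}"
    show "f t = [:of_int (dd (nat (k + 1)) t) * (-1) powi (k + t) * u1 p powi (k - 2 * t - 1):]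
                * vp ((k - 2 * t - 1) * g1 p) * vp ((t + 1) * g2 p)"
    proof (cases "2 * t < k")
      case True
      then have t': "0 \<le> t" "0 \<le> k - 2 * t - 1" using t by auto
      show ?thesis
        unfolding f_def mult.assoc[of "[:_:]"]
        by (rule const_monomial_eq[symmetric]) (use t' g in \<open>simp_all add: power_int_def vp_mult\<close>)
    next
      case False
      then have "dd (nat (k + 1)) t = 0" using t by (simp add: cc_dd_eq_0)
      then show ?thesis unfolding f_def by simp
    qed
  qed
  finally show ?thesis .
qed

lemma tail_coeff_0_left: "0 \<le> t \<Longrightarrow> tail_coeff 0 t = (-1) ^ nat (t + 1)"
  by (cases "t = 0") (simp_all add: tail_coeff_def cc_0)

lemma tail_term_row:
  assumes "1 \<le> p" "0 \<le> t" "t \<le> k - 1"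
  shows "[:cT p t * of_nat p powi (k - t - 1):] * vp (t * g1 p)
       = of_int (tail_coeff 0 t) * ([:u1 p:] * vp (g1 p)) ^ nat t * vp (g2 p) ^ nat 0
         * [:of_nat p ^ nat (k - 1 - 2 * 0 - t):]"
  by (rule const_monomial_eq_scaled)
     (use assms in \<open>simp_all add: cT_def power_int_def tail_coeff_0_left vp_mult g1_nonneg
                                  algebra_simps\<close>)

lemma tail_term_column:
  assumes "1 \<le> p" "1 \<le> r" "2 * r \<le> k - 1"
  shows "[:cP r * of_nat p powi (k - 2 * r - 1):] * vp (r * g2 p)
       = of_int (tail_coeff r 0) * ([:u1 p:] * vp (g1 p)) ^ nat 0 * vp (g2 p) ^ nat r
         * [:of_nat p ^ nat (k - 1 - 2 * r - 0):]"
  by (rule const_monomial_eq_scaled)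
     (use assms in \<open>simp_all add: cP_def tail_coeff_def power_int_def vp_mult g2_nonneg
                                  algebra_simps\<close>)

lemma tail_term_interior:
  assumes "1 \<le> p" "1 \<le> r" "1 \<le> t" "2 * r + t \<le> k - 1"
  shows "[:cRT p r t * of_nat p powi (k - 2 * r - t - 1):] * vp (r * g2 p + t * g1 p)
       = of_int (tail_coeff r t) * ([:u1 p:] * vp (g1 p)) ^ nat t * vp (g2 p) ^ nat r
         * [:of_nat p ^ nat (k - 1 - 2 * r - t):]"
  by (rule const_monomial_eq_scaled)
     (use assms in \<open>simp_all add: cRT_def tail_coeff_def power_int_def vp_add vp_mult g1_nonneg
                                  g2_nonneg algebra_simps\<close>)

lemma rem_tail_expansion:
  assumes p: "prime p" and k: "2 \<le> k"
  shows "rem_tail [:of_nat p:] ([:u1 p:] * vp (g1 p)) (vp (g2 p)) (AB_poly p) k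
       = (\<Sum>t = 0..k - 1. [:cT p t * of_nat p powi (k - t - 1):] * vp (t * g1 p) * AB_poly p)
         + (\<Sum>t = 1..(k - 1) div 2. [:cP t * of_nat p powi (k - 2 * t - 1):] * vp (t * g2 p) * AB_poly p)
         + (\<Sum>r = 1..(k - 2) div 2. \<Sum>t = 1..k - 1 - 2 * r.
              [:cRT p r t * of_nat p powi (k - 2 * r - t - 1):] * vp (r * g2 p + t * g1 p) * AB_poly p)"
proof -
  have p1: "1 \<le> p" using prime_ge_1_nat[OF p] .
  define F where "F r t = of_int (tail_coeff r t) * ([:u1 p:] * vp (g1 p)) ^ nat t * vp (g2 p) ^ nat r
                           * [:of_nat p ^ nat (k - 1 - 2 * r - t):] * AB_poly p" for r t
  have "rem_tail [:of_nat p:] ([:u1 p:] * vp (g1 p)) (vp (g2 p)) (AB_poly p) k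
      = (\<Sum>r = 0..k. \<Sum>t = 0..k. if 2 * r + t \<le> k - 1 then F r t else 0)"
    unfolding rem_tail_def F_def poly_const_pow ..
  also have "\<dots> = (\<Sum>t = 0..k - 1. F 0 t) + (\<Sum>r = 1..(k - 1) div 2. F r 0)
         + (\<Sum>r = 1..(k - 2) div 2. \<Sum>t = 1..k - 1 - 2 * r. F r t)"
    using k by (rule sum_triangle_split)
  also have "(\<Sum>t = 0..k - 1. F 0 t)
           = (\<Sum>t = 0..k - 1. [:cT p t * of_nat p powi (k - t - 1):] * vp (t * g1 p) * AB_poly p)"
    by (rule sum.cong[OF refl]) (subst tail_term_row[OF p1], auto simp: F_def)
  also have "(\<Sum>r = 1..(k - 1) div 2. F r 0)
           = (\<Sum>r = 1..(k - 1) div 2. [:cP r * of_nat p powi (k - 2 * r - 1):] * vp (r * g2 p) * AB_poly p)"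
    by (rule sum.cong[OF refl]) (subst tail_term_column[OF p1], auto simp: F_def)
  also have "(\<Sum>r = 1..(k - 2) div 2. \<Sum>t = 1..k - 1 - 2 * r. F r t)
           = (\<Sum>r = 1..(k - 2) div 2. \<Sum>t = 1..k - 1 - 2 * r.
                [:cRT p r t * of_nat p powi (k - 2 * r - t - 1):] * vp (r * g2 p + t * g1 p) * AB_poly p)"
    by (intro sum.cong refl) (subst tail_term_interior[OF p1], auto simp: F_def)
  finally show ?thesis .
qed

theorem theorem4p2:
  fixes p :: nat and a b k :: int
  assumes "prime p" and "k \<ge> 2"
  shows "ku_eq p
    (sc (cst (of_nat p ^ nat (k + 1))) (br a b))
    (eadd (sc (cst ((-1) powi k * u1 p powi k * of_nat p) * vp (k * g1 p)) (br a (b - k * g1 p)))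
    (eadd (sc (cst ((-1) powi k * u1 p powi (k - 1)) * vp ((k - 1) * g1 p + g2 p))
              (br a (b - (k - 1) * g1 p - g2 p)))
    (eadd (esum (\<lambda>t. eadd
              (sc (cst (of_int (cc (nat (k + 1)) t) * (-1) powi (k + t) * u1 p powi (k - 2 * t) * of_nat p)
                     * vp ((k - 2 * t) * g1 p + t * g2 p))
                  (br a (b - (k - 2 * t) * g1 p - t * g2 p)))
              (sc (cst (of_int (dd (nat (k + 1)) t) * (-1) powi (k + t) * u1 p powi (k - 2 * t - 1))
                     * vp ((k - 2 * t - 1) * g1 p) * vp ((t + 1) * g2 p))
                  (br a (b - (k - 2 * t - 1) * g1 p - (t + 1) * g2 p))))
            {1 .. k div 2})
    (eadd (esum (\<lambda>t. sc (cst (cT p t * of_nat p powi (k - t - 1)) * vp (t * g1 p))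
                        (AB p a (b - t * g1 p)))
            {0 .. k - 1})
    (eadd (esum (\<lambda>t. sc (cst (cP t * of_nat p powi (k - 2 * t - 1)) * vp (t * g2 p))
                        (AB p a (b - t * g2 p)))
            {1 .. (k - 1) div 2})
          (esum (\<lambda>r. esum (\<lambda>t. sc (cst (cRT p r t * of_nat p powi (k - 2 * r - t - 1))
                                     * vp (r * g2 p + t * g1 p))
                                 (AB p a (b - r * g2 p - t * g1 p)))
                       {1 .. k - 1 - 2 * r})
            {1 .. (k - 2) div 2}))))))"
  using ku_eq_power_rem[OF assms, of a b]
  unfolding rem_lin_expansion[OF assms] rem_const_expansion[OF assms] rem_tail_expansion[OF assms]
  by (simp only: diff_diff_eq poly_const_pow sc_cst_br_eq_diag sc_br_eq_diag sc_br_eq_diag2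
                 sc_AB_eq_diag eadd_diag esum_diag sum.distrib)
     (simp only: add_ac)

end
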